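(* Let $\Delta$ be a positive integer and let $f\colon\mathbb{N}\to\mathbb{R}$ be a superlinear function with $f(r)\geq \Delta r+1$ for all $r\in\mathbb{N}$. Then every finite graph $G$ with maximum degree $\Delta$ has a uniform subdivision $\tilde G$ with growth $f_{\tilde G}(r)\leq f(r)$ for every positive integer $r$.
   Context: $\mathbb{N}$ is the set of positive integers. A function $f\colon\mathbb{N}\to\mathbb{R}$ is superlinear if $f(x)/x\to\infty$ as $x\to\infty$. The growth of a finite graph $G$ is the function $f_G\colon\mathbb{N}\to\mathbb{N}$ where $f_G(r)$ is the maximum of $|V(H)|$ over all subgraphs $H$ of $G$ of radius at most $r$. A subdivision of $G$ is a graph obtained by replacing each edge $vw$ by a path $P_{vw}$ with endpoints $v$ and $w$, internally disjoint from the rest of the graph; it is uniform if all the paths $P_{vw}$ have the same length. *)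

theory Defs
  imports Complex_Main
begin

definition graph :: "'a set \<Rightarrow> ('a \<Rightarrow> 'a \<Rightarrow> bool) \<Rightarrow> bool" where
  "graph V E \<longleftrightarrow> finite V \<and> (\<forall>x y. E x y \<longrightarrow> x \<in> V \<and> y \<in> V \<and> x \<noteq> y \<and> E y x)"

definition degree :: "'a set \<Rightarrow> ('a \<Rightarrow> 'a \<Rightarrow> bool) \<Rightarrow> 'a \<Rightarrow> nat" where
  "degree V E v = card {w \<in> V. E v w}"

definition max_degree_is :: "'a set \<Rightarrow> ('a \<Rightarrow> 'a \<Rightarrow> bool) \<Rightarrow> nat \<Rightarrow> bool" where
  "max_degree_is V E D \<longleftrightarrow> (\<forall>v\<in>V. degree V E v \<le> D) \<and> (\<exists>v\<in>V. degree V E v = D)"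

definition walk :: "('a \<Rightarrow> 'a \<Rightarrow> bool) \<Rightarrow> 'a list \<Rightarrow> bool" where
  "walk E p \<longleftrightarrow> p \<noteq> [] \<and> (\<forall>i. Suc i < length p \<longrightarrow> E (p ! i) (p ! Suc i))"

definition dist_le :: "('a \<Rightarrow> 'a \<Rightarrow> bool) \<Rightarrow> 'a \<Rightarrow> 'a \<Rightarrow> nat \<Rightarrow> bool" where
  "dist_le E x y n \<longleftrightarrow> (\<exists>p. walk E p \<and> hd p = x \<and> last p = y \<and> length p \<le> Suc n)"

definition subgraph :: "'a set \<Rightarrow> ('a \<Rightarrow> 'a \<Rightarrow> bool) \<Rightarrow> 'a set \<Rightarrow> ('a \<Rightarrow> 'a \<Rightarrow> bool) \<Rightarrow> bool" where
  "subgraph W F V E \<longleftrightarrow> W \<subseteq> V \<and> (\<forall>x y. F x y \<longrightarrow> E x y \<and> x \<in> W \<and> y \<in> W \<and> F y x)"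

definition radius_le :: "'a set \<Rightarrow> ('a \<Rightarrow> 'a \<Rightarrow> bool) \<Rightarrow> nat \<Rightarrow> bool" where
  "radius_le W F r \<longleftrightarrow> (\<exists>c\<in>W. \<forall>x\<in>W. dist_le F c x r)"

definition growth :: "'a set \<Rightarrow> ('a \<Rightarrow> 'a \<Rightarrow> bool) \<Rightarrow> nat \<Rightarrow> nat" where
  "growth V E r = Max {card W | W F. subgraph W F V E \<and> radius_le W F r}"

text \<open>(VH,EH) is the subdivision of (V,E) in which every edge vw is replaced by a
path P v w of length k (k+1 vertices) from phi v to phi w; the paths are internally
disjoint from each other and from the branch vertices, and H consists exactly of
the branch vertices and the paths.\<close>
definition uniform_subdivision ::
  "'a set \<Rightarrow> ('a \<Rightarrow> 'a \<Rightarrow> bool) \<Rightarrow> 'b set \<Rightarrow> ('b \<Rightarrow> 'b \<Rightarrow> bool) \<Rightarrow> nat \<Rightarrow> bool" where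
  "uniform_subdivision V E VH EH k \<longleftrightarrow>
     (\<exists>(\<phi>::'a \<Rightarrow> 'b) (P::'a \<Rightarrow> 'a \<Rightarrow> 'b list).
        inj_on \<phi> V \<and>
        (\<forall>v w. E v w \<longrightarrow> length (P v w) = Suc k \<and> hd (P v w) = \<phi> v \<and> last (P v w) = \<phi> w
              \<and> distinct (P v w) \<and> P w v = rev (P v w)) \<and>
        VH = \<phi> ` V \<union> \<Union>{set (P v w) | v w. E v w} \<and>
        (\<forall>x y. EH x y \<longleftrightarrow> (\<exists>v w i. E v w \<and> i < k \<and> x = P v w ! i \<and> y = P v w ! Suc i)) \<and>
        (\<forall>v w v' w' i j. E v w \<and> E v' w' \<and> 0 < i \<and> i < k \<and> 0 < j \<and> j < k \<and>
              P v w ! i = P v' w' ! j \<longrightarrow> (v = v' \<and> w = w') \<or> (v = w' \<and> w = v')) \<and>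
        (\<forall>v w i x. E v w \<and> 0 < i \<and> i < k \<and> x \<in> V \<longrightarrow> P v w ! i \<noteq> \<phi> x))"

definition superlinear :: "(nat \<Rightarrow> real) \<Rightarrow> bool" where
  "superlinear f \<longleftrightarrow> filterlim (\<lambda>x. f x / real x) at_top at_top"

end

theory Submission
  imports Defs
begin

(* Subdivide every edge into a path of length k = 2R. A ball of radius r < R then contains at
   most one branch vertex u and lies in a star around u: a segment of one path through u plus
   initial segments of length at most r of the other paths at u, hence it has at most D r + 1
   vertices. For r \<ge> R the whole subdivision has at most |V|^2 (2R + 1) \<le> 3 |V|^2 r vertices,
   which is at most f r once R is large, by superlinearity. For D = 1 the star bound fails
   (balls in the middle of a long path have 2r + 1 vertices); there the graph is a matching and
   the trivial subdivision k = 1 has growth at most 2. *)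

lemma dist_le_mono:
  assumes "\<And>x y. F x y \<Longrightarrow> G x y" and "dist_le F c x r"
  shows "dist_le G c x r"
  using assms unfolding dist_le_def walk_def by blast

lemma dist_le_in_layer:
  assumes dist: "dist_le E c x r" and start: "c \<in> L 0" and "mono L"
    and step: "\<And>j y z. j < r \<Longrightarrow> y \<in> L j \<Longrightarrow> E y z \<Longrightarrow> z \<in> L (Suc j)"
  shows "x \<in> L r"
proof -
  obtain p where p: "walk E p" "hd p = c" "last p = x" "length p \<le> Suc r"
    using dist by (auto simp: dist_le_def)
  have "p ! j \<in> L j" if "j < length p" for j
    using that
  proof (induction j)
    case 0
    then show ?case using p(1,2) start by (simp add: walk_def hd_conv_nth)
  next
    case (Suc j)
    have "E (p ! j) (p ! Suc j)" using p(1) Suc.prems by (simp add: walk_def)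
    then show ?case using Suc p(4) step by simp
  qed
  moreover have "p \<noteq> []" using p(1) by (simp add: walk_def)
  ultimately have "x \<in> L (length p - 1)"
    using p(3) by (metis diff_less last_conv_nth length_greater_0_conv zero_less_one)
  moreover have "L (length p - 1) \<subseteq> L r" using \<open>mono L\<close> p(4) by (simp add: monoD)
  ultimately show ?thesis by blast
qed

lemma dist_le_in_closed_set:
  assumes "dist_le E c x r" and "c \<in> S" and "\<And>y z. y \<in> S \<Longrightarrow> E y z \<Longrightarrow> z \<in> S"
  shows "x \<in> S"
  using dist_le_in_layer[where L = "\<lambda>_. S", OF assms(1,2)] assms(3) by (simp add: mono_def)

lemma growth_le:
  assumes fin: "finite V" and "V \<noteq> {}"
    and ball: "\<And>c. c \<in> V \<Longrightarrow> card {x \<in> V. dist_le E c x r} \<le> B"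
  shows "growth V E r \<le> B"
proof -
  let ?S = "{card W | W F. subgraph W F V E \<and> radius_le W F r}"
  have "?S \<subseteq> {..card V}"
    using fin by (auto simp: subgraph_def intro: card_mono)
  then have "finite ?S" using finite_subset by blast
  obtain c where c: "c \<in> V" using \<open>V \<noteq> {}\<close> by blast
  have "subgraph {c} (\<lambda>_ _. False) V E" using c by (simp add: subgraph_def)
  moreover have "radius_le {c} (\<lambda>_ _. False) r"
    unfolding radius_le_def dist_le_def
    by (intro bexI[of _ c] ballI exI[of _ "[c]"]) (auto simp: walk_def)
  ultimately have "?S \<noteq> {}" by blast
  moreover have "n \<le> B" if "n \<in> ?S" for n
  proof -
    obtain W F where n: "n = card W" and sub: "subgraph W F V E" and "radius_le W F r"
      using \<open>n \<in> ?S\<close> by blast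
    then obtain c where c: "c \<in> W" and "\<forall>x\<in>W. dist_le F c x r" by (auto simp: radius_le_def)
    moreover have "\<And>x y. F x y \<Longrightarrow> E x y" using sub by (simp add: subgraph_def)
    ultimately have "W \<subseteq> {x \<in> V. dist_le E c x r}"
      using sub dist_le_mono[of F E] by (auto simp: subgraph_def)
    then have "card W \<le> card {x \<in> V. dist_le E c x r}"
      using fin by (intro card_mono) auto
    also have "\<dots> \<le> B" using ball c sub by (auto simp: subgraph_def)
    finally show ?thesis using n by simp
  qed
  ultimately show ?thesis using \<open>finite ?S\<close> unfolding growth_def by simp
qed

lemma superlinear_eventually_ge_linear:
  assumes "superlinear f"
  obtains R :: nat where "R \<ge> 1" and "\<And>x. x \<ge> R \<Longrightarrow> C * real x \<le> f x"
proof -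
  have "eventually (\<lambda>x. C \<le> f x / real x) at_top"
    using assms unfolding superlinear_def filterlim_at_top by blast
  then obtain R0 where R0: "\<And>x. x \<ge> R0 \<Longrightarrow> C \<le> f x / real x"
    unfolding eventually_at_top_linorder by blast
  show ?thesis
  proof (rule that[of "max R0 1"])
    fix x assume "x \<ge> max R0 1"
    then show "C * real x \<le> f x" using R0[of x] by (simp add: pos_le_divide_eq)
  qed simp
qed

lemma star_size_arith:
  fixes D m s r :: nat
  assumes "D \<ge> 2" and "m \<le> D - 1"
  shows "(Suc (s + r) - (s - r)) + m * (r - s) \<le> D * r + 1"
proof -
  have "m * (r - s) \<le> (D - 1) * (r - s)" using assms by simp
  moreover have "(Suc (s + r) - (s - r)) + (D - 1) * (r - s) \<le> D * r + 1"
  proof (cases "s \<le> r")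
    case True
    then obtain d where r: "r = s + d" using le_Suc_ex by blast
    obtain e where D: "D = e + 2" using assms(1) by (metis add.commute le_Suc_ex)
    show ?thesis unfolding r D by (simp add: algebra_simps)
  next
    case False
    have "2 * r \<le> D * r" using mult_le_mono1[OF assms(1), of r] by simp
    then show ?thesis using False by (simp del: mult_le_cancel2 add: mult_2)
  qed
  ultimately show ?thesis by linarith
qed

locale subdivided_graph =
  fixes V :: "'a set" and E :: "'a \<Rightarrow> 'a \<Rightarrow> bool" and g :: "'a \<Rightarrow> nat" and k :: nat
  assumes graph: "graph V E" and inj_g: "inj_on g V" and k_pos: "0 < k"
begin

(* The branch vertex of v is (v, v, 0); the vertex at distance t from a on the path from a to b
   is (a, b, t) if g a < g b and (b, a, k - t) otherwise, so that both orientations of an edge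
   give its interior vertices the same names. *)

definition sub_vertex :: "'a \<Rightarrow> 'a \<Rightarrow> nat \<Rightarrow> 'a \<times> 'a \<times> nat" where
  "sub_vertex u w t = (if t = 0 then (u, u, 0) else if t = k then (w, w, 0)
     else if g u < g w then (u, w, t) else (w, u, k - t))"

definition sub_path :: "'a \<Rightarrow> 'a \<Rightarrow> ('a \<times> 'a \<times> nat) list" where
  "sub_path u w = map (sub_vertex u w) [0..<Suc k]"

definition sub_verts :: "('a \<times> 'a \<times> nat) set" where
  "sub_verts = (\<lambda>v. (v, v, 0)) ` V \<union> \<Union>{set (sub_path v w) | v w. E v w}"

definition sub_edge :: "'a \<times> 'a \<times> nat \<Rightarrow> 'a \<times> 'a \<times> nat \<Rightarrow> bool" where
  "sub_edge x y \<longleftrightarrow> (\<exists>v w i. E v w \<and> i < k \<and> x = sub_path v w ! i \<and> y = sub_path v w ! Suc i)"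

lemma finite_V: "finite V"
  using graph by (simp add: graph_def)

lemma edgeD:
  assumes "E u w"
  shows "u \<in> V" "w \<in> V" "u \<noteq> w" "E w u" "g u \<noteq> g w"
proof -
  show "u \<in> V" "w \<in> V" "u \<noteq> w" "E w u" using graph assms by (auto simp: graph_def)
  then show "g u \<noteq> g w" using inj_g by (auto dest: inj_onD)
qed

lemma finite_neighbours: "finite {w. E u w}"
  using finite_V by (rule finite_subset[rotated]) (auto dest: edgeD)

lemma card_neighbours: "card {w. E u w} = degree V E u"
  unfolding degree_def by (rule arg_cong[where f = card]) (auto dest: edgeD)

lemma sub_vertex_0: "sub_vertex u w 0 = (u, u, 0)"
  by (simp add: sub_vertex_def)

lemma sub_vertex_k: "sub_vertex u w k = (w, w, 0)"
  using k_pos by (simp add: sub_vertex_def)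

lemma sub_vertex_swap:
  assumes "E u w" and "i \<le> k"
  shows "sub_vertex w u i = sub_vertex u w (k - i)"
  using edgeD[OF assms(1)] assms(2) k_pos by (auto simp: sub_vertex_def)

lemma sub_vertex_inj:
  assumes "E u w" and "i \<le> k" and "j \<le> k" and "sub_vertex u w i = sub_vertex u w j"
  shows "i = j"
  using edgeD[OF assms(1)] assms k_pos unfolding sub_vertex_def by (auto split: if_splits)

lemma sub_vertex_eq_inner:
  assumes "E u w" and "E v z" and "i \<le> k" and "sub_vertex u w t = sub_vertex v z i"
    and "0 < t" and "t < k"
  shows "(v = u \<and> z = w \<and> i = t) \<or> (v = w \<and> z = u \<and> i = k - t)"
  using edgeD[OF assms(1)] edgeD[OF assms(2)] assms k_pos
  unfolding sub_vertex_def by (auto split: if_splits)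

lemma sub_vertex_eq_branch:
  assumes "E v z" and "i \<le> k" and "sub_vertex v z i = (u, u, 0)"
  shows "(i = 0 \<and> v = u) \<or> (i = k \<and> z = u)"
  using edgeD[OF assms(1)] assms k_pos unfolding sub_vertex_def by (auto split: if_splits)

lemma nth_sub_path: "i \<le> k \<Longrightarrow> sub_path u w ! i = sub_vertex u w i"
  unfolding sub_path_def by (simp del: upt_Suc add: nth_map_upt)

lemma length_sub_path: "length (sub_path u w) = Suc k"
  by (simp add: sub_path_def)

lemma set_sub_path: "set (sub_path u w) = sub_vertex u w ` {0..k}"
  unfolding sub_path_def by (simp del: upt_Suc add: atLeastLessThanSuc_atLeastAtMost)

lemma sub_edge_iff:
  "sub_edge x y \<longleftrightarrow> (\<exists>v z i. E v z \<and> i < k \<and> x = sub_vertex v z i \<and> y = sub_vertex v z (Suc i))"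
  unfolding sub_edge_def by (metis nth_sub_path Suc_leI less_imp_le_nat)

lemma sub_verts_eq:
  "sub_verts = (\<lambda>v. (v, v, 0)) ` V \<union> {sub_vertex v w i | v w i. E v w \<and> i \<le> k}"
proof -
  have "\<Union>{sub_vertex v w ` {0..k} | v w. E v w} = {sub_vertex v w i | v w i. E v w \<and> i \<le> k}"
    by fastforce
  then show ?thesis unfolding sub_verts_def set_sub_path by simp
qed

lemma sub_verts_subset: "sub_verts \<subseteq> V \<times> V \<times> {0..k}"
  unfolding sub_verts_eq sub_vertex_def by (auto dest: edgeD)

lemma finite_sub_verts: "finite sub_verts"
  by (rule finite_subset[OF sub_verts_subset]) (simp add: finite_V)

lemma card_sub_verts_le: "card sub_verts \<le> card V * card V * Suc k"
proof -
  have "card sub_verts \<le> card (V \<times> V \<times> {0..k})"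
    using sub_verts_subset finite_V by (intro card_mono) auto
  then show ?thesis by (simp add: card_cartesian_product algebra_simps)
qed

lemma sub_verts_nonempty: "V \<noteq> {} \<Longrightarrow> sub_verts \<noteq> {}"
  unfolding sub_verts_def by blast

lemma uniform_subdivision_sub: "uniform_subdivision V E sub_verts sub_edge k"
  unfolding uniform_subdivision_def
proof (intro exI[of _ "\<lambda>v. (v, v, 0)"] exI[of _ sub_path] conjI allI impI)
  show "inj_on (\<lambda>v. (v, v, 0::nat)) V" by (auto simp: inj_on_def)
  fix v w assume e: "E v w"
  show "length (sub_path v w) = Suc k" by (rule length_sub_path)
  have ne: "sub_path v w \<noteq> []" using length_sub_path[of v w] by auto
  show "hd (sub_path v w) = (v, v, 0)"
    by (simp add: hd_conv_nth[OF ne] nth_sub_path sub_vertex_0)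
  show "last (sub_path v w) = (w, w, 0)"
    by (simp add: last_conv_nth[OF ne] length_sub_path nth_sub_path sub_vertex_k)
  show "distinct (sub_path v w)"
    unfolding sub_path_def distinct_map
    using sub_vertex_inj[OF e] by (auto simp: inj_on_def simp del: upt_Suc)
  show "sub_path w v = rev (sub_path v w)"
    by (rule nth_equalityI) (auto simp: length_sub_path rev_nth nth_sub_path sub_vertex_swap[OF e])
next
  fix v w v' w' i j
  assume "E v w \<and> E v' w' \<and> 0 < i \<and> i < k \<and> 0 < j \<and> j < k \<and> sub_path v w ! i = sub_path v' w' ! j"
  then show "v = v' \<and> w = w' \<or> v = w' \<and> w = v'"
    using sub_vertex_eq_inner[of v w v' w' j i] by (auto simp: nth_sub_path)
next
  fix v w i x
  assume "E v w \<and> 0 < i \<and> i < k \<and> x \<in> V"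
  then show "sub_path v w ! i \<noteq> (x, x, 0)"
    using sub_vertex_eq_branch[of v w i x] by (auto simp: nth_sub_path)
qed (simp_all add: sub_verts_def sub_edge_def)

lemma sub_edge_from_branch:
  assumes "sub_edge (u, u, 0) y"
  obtains w where "E u w" and "y = sub_vertex u w 1"
proof -
  obtain v z i where vz: "E v z" "i < k" "sub_vertex v z i = (u, u, 0)" "y = sub_vertex v z (Suc i)"
    using assms by (auto simp: sub_edge_iff)
  then have "i = 0 \<and> v = u" using sub_vertex_eq_branch[of v z i u] by simp
  then show thesis using that vz by simp
qed

lemma sub_edge_from_inner:
  assumes "E u w" and "0 < t" and "t < k" and "sub_edge (sub_vertex u w t) y"
  shows "y = sub_vertex u w (t - 1) \<or> y = sub_vertex u w (Suc t)"
proof -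
  obtain v z i where vz: "E v z" "i < k" "sub_vertex u w t = sub_vertex v z i"
    and y: "y = sub_vertex v z (Suc i)"
    using assms(4) by (auto simp: sub_edge_iff)
  then consider "v = u" "z = w" "i = t" | "v = w" "z = u" "i = k - t"
    using sub_vertex_eq_inner[OF assms(1) vz(1) _ vz(3)] assms(2,3) by fastforce
  then show ?thesis
  proof cases
    case 2
    then have "y = sub_vertex u w (k - Suc (k - t))"
      using y sub_vertex_swap[OF assms(1), of "Suc (k - t)"] assms(2,3) by simp
    then show ?thesis using assms(2,3) by (simp add: Suc_diff_Suc)
  qed (use y in simp)
qed

(* {1..j - s} is empty while j \<le> s: the spokes at u only appear once the ball has reached u. *)
definition star_nbhd :: "'a \<Rightarrow> 'a \<Rightarrow> nat \<Rightarrow> nat \<Rightarrow> ('a \<times> 'a \<times> nat) set" where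
  "star_nbhd u w s j =
     sub_vertex u w ` {s - j..s + j} \<union> (\<Union>w'\<in>{w'. E u w'}. sub_vertex u w' ` {1..j - s})"

lemma mono_star_nbhd: "mono (star_nbhd u w s)"
  unfolding star_nbhd_def by (intro monoI Un_mono UN_mono image_mono) auto

lemma star_nbhd_step:
  assumes e: "E u w" and "s + j < k" and x: "x \<in> star_nbhd u w s j" and xy: "sub_edge x y"
  shows "y \<in> star_nbhd u w s (Suc j)"
proof -
  consider (path) t where "s - j \<le> t" "t \<le> s + j" "x = sub_vertex u w t"
    | (spoke) w' t where "E u w'" "1 \<le> t" "t \<le> j - s" "x = sub_vertex u w' t"
    using x unfolding star_nbhd_def by auto
  then show ?thesis
  proof cases
    case path
    show ?thesis
    proof (cases "t = 0")
      case True
      then have "sub_edge (u, u, 0) y" using xy path(3) by (simp add: sub_vertex_0)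
      then obtain w' where "E u w'" "y = sub_vertex u w' 1" by (rule sub_edge_from_branch)
      moreover have "s \<le> j" using path(1) True by simp
      ultimately show ?thesis unfolding star_nbhd_def by auto
    next
      case False
      then have "y = sub_vertex u w (t - 1) \<or> y = sub_vertex u w (Suc t)"
        using sub_edge_from_inner[OF e] xy path(2,3) \<open>s + j < k\<close> by simp
      moreover have "t - 1 \<in> {s - Suc j..s + Suc j}" "Suc t \<in> {s - Suc j..s + Suc j}"
        using path(1,2) False by auto
      ultimately show ?thesis unfolding star_nbhd_def by blast
    qed
  next
    case spoke
    then have "y = sub_vertex u w' (t - 1) \<or> y = sub_vertex u w' (Suc t)"
      using sub_edge_from_inner xy \<open>s + j < k\<close> by simp
    then show ?thesis
    proof
      assume y: "y = sub_vertex u w' (t - 1)"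
      show ?thesis
      proof (cases "t = 1")
        case True
        then have "y = sub_vertex u w 0" using y by (simp add: sub_vertex_0)
        moreover have "s - Suc j = 0" using spoke(2,3) by simp
        ultimately show ?thesis unfolding star_nbhd_def by auto
      next
        case False
        then have "t - 1 \<in> {1..Suc j - s}" using spoke(2,3) by auto
        then show ?thesis using y spoke(1) unfolding star_nbhd_def by blast
      qed
    qed (use spoke in \<open>auto simp: star_nbhd_def\<close>)
  qed
qed

lemma dist_le_imp_star_nbhd:
  assumes "E u w" and "s + r \<le> k" and "dist_le sub_edge (sub_vertex u w s) x r"
  shows "x \<in> star_nbhd u w s r"
proof (rule dist_le_in_layer[OF assms(3) _ mono_star_nbhd])
  show "sub_vertex u w s \<in> star_nbhd u w s 0" by (simp add: star_nbhd_def)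
  fix j y z assume "j < r" "y \<in> star_nbhd u w s j" "sub_edge y z"
  then show "z \<in> star_nbhd u w s (Suc j)" using star_nbhd_step[OF assms(1)] assms(2) by simp
qed

lemma card_star_nbhd_le:
  assumes e: "E u w" and deg: "degree V E u \<le> D" and "D \<ge> 2"
  shows "card (star_nbhd u w s r) \<le> D * r + 1"
proof -
  let ?N = "{w'. E u w'} - {w}"
  let ?path = "sub_vertex u w ` {s - r..s + r}"
  let ?spokes = "\<Union>w'\<in>?N. sub_vertex u w' ` {1..r - s}"
  have "star_nbhd u w s r \<subseteq> ?path \<union> ?spokes"
  proof
    fix x assume "x \<in> star_nbhd u w s r"
    then consider "x \<in> ?path" | w' t where "E u w'" "t \<in> {1..r - s}" "x = sub_vertex u w' t"
      unfolding star_nbhd_def by blast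
    then show "x \<in> ?path \<union> ?spokes"
    proof cases
      case 2
      show ?thesis
      proof (cases "w' = w")
        case True
        then have "t \<in> {s - r..s + r}" using 2 by auto
        then show ?thesis using 2 True by blast
      qed (use 2 in blast)
    qed blast
  qed
  then have "card (star_nbhd u w s r) \<le> card (?path \<union> ?spokes)"
    using finite_neighbours by (intro card_mono) auto
  also have "\<dots> \<le> card ?path + card ?spokes"
    by (rule card_Un_le)
  also have "card ?path \<le> Suc (s + r) - (s - r)"
    using card_image_le[of "{s - r..s + r}" "sub_vertex u w"] by simp
  also have "card ?spokes \<le> (\<Sum>w'\<in>?N. card (sub_vertex u w' ` {1..r - s}))"
    by (rule card_UN_le) (simp add: finite_neighbours)
  also have "\<dots> \<le> (\<Sum>w'\<in>?N. r - s)"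
    by (rule sum_mono) (metis card_atLeastAtMost card_image_le diff_Suc_1 finite_atLeastAtMost)
  also have "\<dots> = card ?N * (r - s)" by simp
  finally have "card (star_nbhd u w s r) \<le> (Suc (s + r) - (s - r)) + card ?N * (r - s)"
    by simp
  moreover have "card ?N \<le> D - 1"
    using finite_neighbours e deg card_neighbours[of u] by (simp add: card_Diff_singleton)
  ultimately show ?thesis using star_size_arith[OF \<open>D \<ge> 2\<close>] by (meson le_trans)
qed

lemma sub_verts_cases:
  assumes "c \<in> sub_verts"
  obtains (isolated) v where "c = (v, v, 0)" and "\<And>w. \<not> E v w"
    | (on_edge) u w s where "E u w" and "2 * s \<le> k" and "c = sub_vertex u w s"
proof -
  consider (branch) v where "c = (v, v, 0)" | (path) v w i where "E v w" "i \<le> k" "c = sub_vertex v w i"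
    using assms unfolding sub_verts_eq by blast
  then show thesis
  proof cases
    case branch
    show thesis
    proof (cases "\<exists>w. E v w")
      case True
      then obtain w where "E v w" by blast
      then show thesis using on_edge[of v w 0] branch by (simp add: sub_vertex_0)
    qed (use branch isolated in blast)
  next
    case path
    show thesis
    proof (cases "2 * i \<le> k")
      case False
      then show thesis
        using on_edge[of w v "k - i"] path sub_vertex_swap[OF path(1), of "k - i"] edgeD(4)[OF path(1)]
        by simp
    qed (use path on_edge in blast)
  qed
qed

lemma card_ball_le:
  assumes deg: "\<forall>v\<in>V. degree V E v \<le> D" and "D \<ge> 2" and c: "c \<in> sub_verts" and "2 * r < k"
  shows "card {x \<in> sub_verts. dist_le sub_edge c x r} \<le> D * r + 1"
  using c
proof (cases rule: sub_verts_cases)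
  case (isolated v)
  have "x \<in> {c}" if "dist_le sub_edge c x r" for x
  proof (rule dist_le_in_closed_set[where S = "{c}", OF that], simp)
    fix y z assume "y \<in> {c}" "sub_edge y z"
    then have "sub_edge (v, v, 0) z" using isolated(1) by simp
    then obtain w where "E v w" by (rule sub_edge_from_branch)
    then show "z \<in> {c}" using isolated(2) by blast
  qed
  then have "card {x \<in> sub_verts. dist_le sub_edge c x r} \<le> card {c}"
    by (intro card_mono) auto
  then show ?thesis by simp
next
  case (on_edge u w s)
  have "{x \<in> sub_verts. dist_le sub_edge c x r} \<subseteq> star_nbhd u w s r"
    using dist_le_imp_star_nbhd[OF on_edge(1)] on_edge(2,3) \<open>2 * r < k\<close> by auto
  then have "card {x \<in> sub_verts. dist_le sub_edge c x r} \<le> card (star_nbhd u w s r)"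
    by (intro card_mono) (simp_all add: star_nbhd_def finite_neighbours)
  also have "\<dots> \<le> D * r + 1"
    using card_star_nbhd_le[OF on_edge(1) _ \<open>D \<ge> 2\<close>] deg edgeD(1)[OF on_edge(1)] by blast
  finally show ?thesis .
qed

lemma growth_sub_le_small_radius:
  assumes "V \<noteq> {}" and "\<forall>v\<in>V. degree V E v \<le> D" and "D \<ge> 2" and "2 * r < k"
  shows "growth sub_verts sub_edge r \<le> D * r + 1"
  using finite_sub_verts sub_verts_nonempty[OF assms(1)] card_ball_le[OF assms(2,3) _ assms(4)]
  by (rule growth_le)

lemma growth_sub_le_card:
  assumes "V \<noteq> {}"
  shows "growth sub_verts sub_edge r \<le> card V * card V * Suc k"
proof -
  have "growth sub_verts sub_edge r \<le> card sub_verts"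
    by (rule growth_le[OF finite_sub_verts sub_verts_nonempty[OF assms]])
      (simp add: card_mono finite_sub_verts)
  then show ?thesis using card_sub_verts_le by linarith
qed

lemma neighbour_unique:
  assumes "degree V E a \<le> 1" and "E a b" and "E a b'"
  shows "b = b'"
proof -
  have "card {w \<in> V. E a w} \<le> 1" using assms(1) by (simp add: degree_def)
  moreover have "finite {w \<in> V. E a w}" using finite_V by simp
  ultimately show ?thesis using assms(2,3) edgeD(2) by (auto simp: card_le_Suc0_iff_eq)
qed

lemma growth_sub_le_two:
  assumes k: "k = 1" and "V \<noteq> {}" and deg: "\<forall>v\<in>V. degree V E v \<le> 1"
  shows "growth sub_verts sub_edge r \<le> 2"
proof (rule growth_le[OF finite_sub_verts sub_verts_nonempty[OF \<open>V \<noteq> {}\<close>]])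
  have step: "sub_vertex u w 1 = (w, w, 0)" for u w
    using sub_vertex_k k by simp
  have "\<exists>a. sub_vertex u w i = (a, a, 0)" if "i \<le> k" for u w i
  proof -
    have "i = 0 \<or> i = k" using that k by linarith
    then show ?thesis using sub_vertex_0 sub_vertex_k by blast
  qed
  moreover fix c assume "c \<in> sub_verts"
  ultimately obtain v where c: "c = (v, v, 0)"
    unfolding sub_verts_eq by blast
  let ?S = "insert c ((\<lambda>z. (z, z, 0)) ` {z. E v z})"
  have "x \<in> ?S" if "dist_le sub_edge c x r" for x
  proof (rule dist_le_in_closed_set[OF that], simp)
    fix y z assume "y \<in> ?S" and "sub_edge y z"
    then obtain a where y: "y = (a, a, 0)" and a: "a = v \<or> E v a" using c by auto
    obtain b where "E a b" and "z = sub_vertex a b 1"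
      using \<open>sub_edge y z\<close> unfolding y by (rule sub_edge_from_branch)
    then have "z = (b, b, 0)" using step by simp
    with \<open>E a b\<close> show "z \<in> ?S"
      using a c neighbour_unique[of a b v] deg edgeD by auto
  qed
  then have "card {x \<in> sub_verts. dist_le sub_edge c x r} \<le> card ?S"
    using finite_neighbours by (intro card_mono) auto
  also have "\<dots> \<le> Suc (card ((\<lambda>z. (z, z, 0::nat)) ` {z. E v z}))"
    by (simp add: card_insert_if finite_neighbours)
  also have "\<dots> \<le> Suc (card {z. E v z})"
    using card_image_le[OF finite_neighbours] by simp
  also have "\<dots> \<le> 2"
  proof (cases "v \<in> V")
    case False
    then have "{z. E v z} = {}" by (auto dest: edgeD(1))
    then show ?thesis by simp
  qed (use deg card_neighbours[of v] in simp)
  finally show "card {x \<in> sub_verts. dist_le sub_edge c x r} \<le> 2" .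
qed

end

lemma exists_uniform_subdivision_growth_le:
  fixes V :: "'a set"
  assumes "graph V E" and "V \<noteq> {}" and deg: "\<forall>v\<in>V. degree V E v \<le> D" and "D \<ge> 1" and "R \<ge> 1"
  shows "\<exists>(VH :: ('a \<times> 'a \<times> nat) set) EH k. uniform_subdivision V E VH EH k \<and>
           (\<forall>r. 1 \<le> r \<longrightarrow> r < R \<longrightarrow> growth VH EH r \<le> D * r + 1) \<and>
           (\<forall>r\<ge>R. growth VH EH r \<le> 3 * card V * card V * r)"
proof -
  obtain g :: "'a \<Rightarrow> nat" where g: "inj_on g V"
    using finite_imp_inj_to_nat_seg[of V] assms(1) by (auto simp: graph_def)
  have "card V \<ge> 1"
    using assms(1,2) by (simp add: graph_def Suc_le_eq card_gt_0_iff)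
  show ?thesis
  proof (cases "D = 1")
    case True
    interpret subdivided_graph V E g 1 using assms(1) g by unfold_locales auto
    have two: "growth sub_verts sub_edge r \<le> 2" for r
      using growth_sub_le_two[OF refl \<open>V \<noteq> {}\<close>] deg True by simp
    have "growth sub_verts sub_edge r \<le> D * r + 1" if "r \<ge> 1" for r
      using two[of r] True that by simp
    moreover have "growth sub_verts sub_edge r \<le> 3 * card V * card V * r" if "r \<ge> 1" for r
    proof -
      have "0 < card V * card V * r" using \<open>card V \<ge> 1\<close> that by simp
      then show ?thesis using two[of r] by linarith
    qed
    ultimately show ?thesis using uniform_subdivision_sub \<open>R \<ge> 1\<close> le_trans by blast
  next
    case False
    interpret subdivided_graph V E g "2 * R" using assms(1) g \<open>R \<ge> 1\<close> by unfold_locales auto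
    have "growth sub_verts sub_edge r \<le> D * r + 1" if "r < R" for r
      using growth_sub_le_small_radius[OF \<open>V \<noteq> {}\<close> deg] False \<open>D \<ge> 1\<close> that by simp
    moreover have "growth sub_verts sub_edge r \<le> 3 * card V * card V * r" if "r \<ge> R" for r
    proof -
      have "growth sub_verts sub_edge r \<le> card V * card V * Suc (2 * R)"
        using growth_sub_le_card \<open>V \<noteq> {}\<close> by blast
      also have "\<dots> \<le> card V * card V * (3 * r)"
        using that \<open>R \<ge> 1\<close> by (intro mult_le_mono2) simp
      finally show ?thesis by (simp add: algebra_simps)
    qed
    ultimately show ?thesis using uniform_subdivision_sub by blast
  qed
qed

theorem theorem19:
  fixes V :: "'a set" and E :: "'a \<Rightarrow> 'a \<Rightarrow> bool" and D :: nat and f :: "nat \<Rightarrow> real"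
  assumes "D > 0"
    and "superlinear f"
    and "\<And>r. r \<ge> 1 \<Longrightarrow> f r \<ge> real D * real r + 1"
    and "graph V E"
    and "max_degree_is V E D"
  shows "\<exists>(VH :: ('a \<times> 'a \<times> nat) set) EH k. uniform_subdivision V E VH EH k \<and>
           (\<forall>r. r \<ge> 1 \<longrightarrow> real (growth VH EH r) \<le> f r)"
proof -
  have deg: "\<forall>v\<in>V. degree V E v \<le> D" and "V \<noteq> {}"
    using assms(5) by (auto simp: max_degree_is_def)
  obtain R where "R \<ge> 1" and R: "\<And>r. r \<ge> R \<Longrightarrow> real (3 * card V * card V) * real r \<le> f r"
    using superlinear_eventually_ge_linear[OF assms(2)] by blast
  obtain VH :: "('a \<times> 'a \<times> nat) set" and EH k where sub: "uniform_subdivision V E VH EH k"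
    and small: "\<And>r. 1 \<le> r \<Longrightarrow> r < R \<Longrightarrow> growth VH EH r \<le> D * r + 1"
    and large: "\<And>r. r \<ge> R \<Longrightarrow> growth VH EH r \<le> 3 * card V * card V * r"
    using exists_uniform_subdivision_growth_le[OF assms(4) \<open>V \<noteq> {}\<close> deg _ \<open>R \<ge> 1\<close>] assms(1)
    by auto
  have "real (growth VH EH r) \<le> f r" if "r \<ge> 1" for r
  proof (cases "r < R")
    case True
    then have "real (growth VH EH r) \<le> real D * real r + 1"
      using small[OF that] by (metis of_nat_1 of_nat_add of_nat_le_iff of_nat_mult)
    then show ?thesis using assms(3)[OF that] by linarith
  next
    case False
    then have "real (growth VH EH r) \<le> real (3 * card V * card V) * real r"
      using large[of r] by (metis linorder_not_less of_nat_le_iff of_nat_mult)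
    then show ?thesis using R[of r] False by linarith
  qed
  then show ?thesis using sub by blast
qed

end
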